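(* Let $\mathcal{G}=(V,E)$ be an $m$-uniform connected hypergraph with $m>2$ on $n$ vertices, with maximum degree $d_{\max}$ and minimum degree $d_{\min}$. Then $$\lambda_n(L_{\mathcal{G}})\le\frac{2d_{\max}(m-1)-1+\sqrt{4(m-1)^2d_{\max}^2|E|^2-2d_{\min}(m-1)+1}}{2(m-1)}.$$
   Context: A hypergraph $\mathcal{G}=(V,E)$ has a finite vertex set $V$ and a set $E$ of subsets of $V$ (edges); it is $m$-uniform if every edge has exactly $m$ vertices. The degree $d_i$ is the number of edges containing $i$, and for distinct $i,j$ the codegree $d_{ij}$ is the number of edges containing both. The Laplacian $L_{\mathcal{G}}$ has $(L_{\mathcal{G}})_{ii}=d_i$ and $(L_{\mathcal{G}})_{ij}=-d_{ij}/(m-1)$ for $i\ne j$; $\lambda_n(L_{\mathcal{G}})$ is its largest eigenvalue. *)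

theory Defs
  imports "HOL-Analysis.Analysis"
begin

text \<open>Hypergraphs on the vertex set UNIV of a finite type 'v; edges E :: 'v set set.\<close>

definition uniform_hg :: "nat \<Rightarrow> 'v set set \<Rightarrow> bool" where
  "uniform_hg m E \<longleftrightarrow> (\<forall>e\<in>E. card e = m)"

definition hg_adj :: "'v set set \<Rightarrow> ('v \<times> 'v) set" where
  "hg_adj E = {(i, j). \<exists>e\<in>E. i \<in> e \<and> j \<in> e}"

definition hg_connected :: "'v set set \<Rightarrow> bool" where
  "hg_connected E \<longleftrightarrow> (\<forall>i j. (i, j) \<in> (hg_adj E)\<^sup>*)"

definition hg_degree :: "'v set set \<Rightarrow> 'v \<Rightarrow> nat" where
  "hg_degree E i = card {e \<in> E. i \<in> e}"

definition hg_codegree :: "'v set set \<Rightarrow> 'v \<Rightarrow> 'v \<Rightarrow> nat" where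
  "hg_codegree E i j = card {e \<in> E. i \<in> e \<and> j \<in> e}"

definition max_degree :: "('v::finite) set set \<Rightarrow> nat" where
  "max_degree E = Max (range (hg_degree E))"

definition min_degree :: "('v::finite) set set \<Rightarrow> nat" where
  "min_degree E = Min (range (hg_degree E))"

definition hg_laplacian :: "nat \<Rightarrow> ('v::finite) set set \<Rightarrow> real^'v^'v" where
  "hg_laplacian m E = (\<chi> i j. if i = j then real (hg_degree E i)
      else - real (hg_codegree E i j) / (real m - 1))"

definition is_eigenvalue :: "real^'n^'n \<Rightarrow> real \<Rightarrow> bool" where
  "is_eigenvalue A c \<longleftrightarrow> (\<exists>v. v \<noteq> 0 \<and> A *v v = c *\<^sub>R v)"

text \<open>Largest eigenvalue (the Laplacian is real symmetric, so all eigenvalues are real).\<close>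
definition largest_eigenvalue :: "real^'n^'n \<Rightarrow> real" where
  "largest_eigenvalue A = Max {c. is_eigenvalue A c}"

end

theory Submission
  imports Defs
begin

text \<open>Gershgorin's theorem bounds every eigenvalue of the Laplacian by twice the maximum
  degree, since row i has diagonal entry d(i) and off-diagonal entries summing to -d(i).
  When there are at least two edges, 2 dmax already lies below the claimed bound, because
  the square root then exceeds 2 dmax (m-1) + 1. With no edges everything is 0. A connected
  hypergraph with one edge e has e = V, so its Laplacian is (1 + 1/(m-1)) I - J/(m-1), whose
  eigenvalues are 1 + 1/(m-1) and 0, again below the bound.\<close>

definition spectral_bound :: "real \<Rightarrow> real \<Rightarrow> real \<Rightarrow> real \<Rightarrow> real" where
  "spectral_bound k D d N = (2 * D * k - 1 + sqrt (4 * k^2 * D^2 * N^2 - 2 * d * k + 1)) / (2 * k)"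

lemma symmetric_matrix_eigenvalues_finite:
  fixes A :: "real^'n^'n"
  assumes sym: "transpose A = A"
  shows "finite {c. is_eigenvalue A c}"
proof -
  define f where "f c = (SOME v. v \<noteq> 0 \<and> A *v v = c *\<^sub>R v)" for c
  have f: "f c \<noteq> 0 \<and> A *v f c = c *\<^sub>R f c" if "is_eigenvalue A c" for c
    using that unfolding f_def is_eigenvalue_def by (rule someI_ex)
  have orth: "f a \<bullet> f b = 0" if "is_eigenvalue A a" "is_eigenvalue A b" "a \<noteq> b" for a b
  proof -
    have "f a v* A = A *v f a" by (metis sym transpose_matrix_vector)
    then have "a * (f a \<bullet> f b) = b * (f a \<bullet> f b)"
      using dot_lmul_matrix[of "f a" A "f b"] f[OF that(1)] f[OF that(2)] by simp
    then show ?thesis using that(3) by simp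
  qed
  have "inj_on f {c. is_eigenvalue A c}"
  proof (rule inj_onI)
    fix a b assume "a \<in> {c. is_eigenvalue A c}" "b \<in> {c. is_eigenvalue A c}" "f a = f b"
    then show "a = b" using orth f by (metis inner_eq_zero_iff mem_Collect_eq)
  qed
  moreover have "finite (f ` {c. is_eigenvalue A c})"
    using orth by (intro pairwise_orthogonal_imp_finite) (auto simp: pairwise_def orthogonal_def)
  ultimately show ?thesis using finite_imageD by blast
qed

lemma largest_eigenvalue_le:
  fixes A :: "real^'n^'n"
  assumes "transpose A = A" and "is_eigenvalue A c\<^sub>0"
    and "\<And>c. is_eigenvalue A c \<Longrightarrow> c \<le> B"
  shows "largest_eigenvalue A \<le> B"
  using assms symmetric_matrix_eigenvalues_finite[OF assms(1)]
  unfolding largest_eigenvalue_def by (subst Max_le_iff) auto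

lemma eigenvalue_zero_if_row_sums_zero:
  fixes A :: "real^'n^'n"
  assumes "\<And>i. (\<Sum>j\<in>UNIV. A $ i $ j) = 0"
  shows "is_eigenvalue A 0"
  unfolding is_eigenvalue_def
proof (intro exI conjI)
  show "(1::real^'n) \<noteq> 0" by (simp add: vec_eq_iff)
  show "A *v 1 = 0 *\<^sub>R (1::real^'n)"
    using assms by (simp add: vec_eq_iff matrix_vector_mult_def)
qed

lemma eigenvalue_abs_le_row_abs_sum:
  fixes A :: "real^'n^'n"
  assumes "is_eigenvalue A c" and row: "\<And>i. (\<Sum>j\<in>UNIV. \<bar>A $ i $ j\<bar>) \<le> R"
  shows "\<bar>c\<bar> \<le> R"
proof -
  obtain v where v: "v \<noteq> 0" "A *v v = c *\<^sub>R v"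
    using assms(1) unfolding is_eigenvalue_def by blast
  have "Max (range (\<lambda>j. \<bar>v $ j\<bar>)) \<in> range (\<lambda>j. \<bar>v $ j\<bar>)" by (rule Max_in) auto
  then obtain i where i: "\<bar>v $ i\<bar> = Max (range (\<lambda>j. \<bar>v $ j\<bar>))" by (metis rangeE)
  have max: "\<bar>v $ j\<bar> \<le> \<bar>v $ i\<bar>" for j unfolding i by (rule Max_ge) auto
  have pos: "\<bar>v $ i\<bar> > 0"
  proof (rule ccontr)
    assume "\<not> \<bar>v $ i\<bar> > 0"
    then have "v $ j = 0" for j using max[of j] by auto
    then show False using v(1) by (simp add: vec_eq_iff)
  qed
  have "c * v $ i = (\<Sum>j\<in>UNIV. A $ i $ j * v $ j)"
    using arg_cong[OF v(2), of "\<lambda>x. x $ i"] by (simp add: matrix_vector_mult_def)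
  then have "\<bar>c\<bar> * \<bar>v $ i\<bar> \<le> (\<Sum>j\<in>UNIV. \<bar>A $ i $ j\<bar> * \<bar>v $ j\<bar>)"
    by (metis (no_types, lifting) abs_mult sum.cong sum_abs)
  also have "\<dots> \<le> (\<Sum>j\<in>UNIV. \<bar>A $ i $ j\<bar>) * \<bar>v $ i\<bar>"
    unfolding sum_distrib_right by (intro sum_mono mult_left_mono max) auto
  also have "\<dots> \<le> R * \<bar>v $ i\<bar>"
    using row pos by (intro mult_right_mono) auto
  finally show ?thesis using pos by simp
qed

lemma eigenvalue_le_of_scalar_minus_constant:
  fixes A :: "real^'n^'n"
  assumes A: "\<And>i j. A $ i $ j = (if i = j then a else 0) - b" and "b \<ge> 0"
    and "is_eigenvalue A c"
  shows "c \<le> a"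
proof (rule ccontr)
  assume "\<not> c \<le> a"
  then have gap: "c - a > 0" by simp
  obtain v where v: "v \<noteq> 0" "A *v v = c *\<^sub>R v"
    using assms(3) unfolding is_eigenvalue_def by blast
  define s where "s = (\<Sum>j\<in>UNIV. v $ j)"
  have row: "(c - a) * v $ i = - b * s" for i
  proof -
    have "c * v $ i = (\<Sum>j\<in>UNIV. A $ i $ j * v $ j)"
      using arg_cong[OF v(2), of "\<lambda>x. x $ i"] by (simp add: matrix_vector_mult_def)
    also have "\<dots> = (\<Sum>j\<in>UNIV. (if i = j then a * v $ j else 0) - b * v $ j)"
      by (rule sum.cong) (auto simp: A algebra_simps)
    also have "\<dots> = a * v $ i - b * s"
      by (simp add: sum_subtractf s_def sum_distrib_left)
    finally show ?thesis by (simp add: algebra_simps)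
  qed
  define t where "t = - b * s / (c - a)"
  have const: "v $ i = t" for i
    using row[of i] gap unfolding t_def by (simp add: field_simps)
  have "t \<noteq> 0" using v(1) const by (auto simp: vec_eq_iff)
  have "s = real CARD('n) * t" unfolding s_def using const by simp
  then have "(c - a) * t = - (b * real CARD('n)) * t"
    using row const by (simp add: algebra_simps)
  then have "c - a = - (b * real CARD('n))"
    using \<open>t \<noteq> 0\<close> by (rule mult_right_cancel[THEN iffD1, rotated])
  moreover have "b * real CARD('n) \<ge> 0" using \<open>b \<ge> 0\<close> by simp
  ultimately show False using gap by linarith
qed

lemma sum_card_incidences:
  fixes S :: "'v set set" and J :: "'v set"
  assumes "finite S" "finite J"
  shows "(\<Sum>j\<in>J. card {e\<in>S. j \<in> e}) = (\<Sum>e\<in>S. card (e \<inter> J))"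
proof -
  have "(\<Sum>j\<in>J. card {e\<in>S. j \<in> e}) = (\<Sum>j\<in>J. \<Sum>e\<in>S. if j \<in> e then 1 else 0)"
    using assms by (simp add: sum.If_cases Int_def)
  also have "\<dots> = (\<Sum>e\<in>S. \<Sum>j\<in>J. if j \<in> e then 1 else 0)" by (rule sum.swap)
  also have "\<dots> = (\<Sum>e\<in>S. card (e \<inter> J))"
    using assms by (simp add: sum.If_cases Int_def conj_commute)
  finally show ?thesis .
qed

lemma sum_codegree:
  fixes E :: "('v::finite) set set"
  assumes "uniform_hg m E"
  shows "(\<Sum>j\<in>-{i}. hg_codegree E i j) = hg_degree E i * (m - 1)"
proof -
  have "(\<Sum>j\<in>-{i}. hg_codegree E i j) = (\<Sum>j\<in>-{i}. card {e\<in>{e\<in>E. i \<in> e}. j \<in> e})"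
    unfolding hg_codegree_def by (intro sum.cong refl arg_cong[where f=card]) auto
  also have "\<dots> = (\<Sum>e\<in>{e\<in>E. i \<in> e}. card (e \<inter> -{i}))"
    by (rule sum_card_incidences) auto
  also have "\<dots> = (\<Sum>e\<in>{e\<in>E. i \<in> e}. m - 1)"
    using assms by (intro sum.cong) (auto simp: uniform_hg_def Diff_eq[symmetric])
  finally show ?thesis by (simp add: hg_degree_def)
qed

lemma hg_laplacian_symmetric: "transpose (hg_laplacian m E) = hg_laplacian m E"
  unfolding hg_laplacian_def transpose_def hg_codegree_def
  by (simp add: vec_eq_iff conj_commute)

lemma hg_laplacian_offdiag_sum:
  fixes E :: "('v::finite) set set"
  assumes "uniform_hg m E" "m \<ge> 2"
  shows "(\<Sum>j\<in>-{i}. hg_laplacian m E $ i $ j) = - real (hg_degree E i)"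
proof -
  have "(\<Sum>j\<in>-{i}. hg_laplacian m E $ i $ j) = - real (\<Sum>j\<in>-{i}. hg_codegree E i j) / (real m - 1)"
    by (simp add: hg_laplacian_def sum_divide_distrib sum_negf)
  also have "\<dots> = - real (hg_degree E i)"
    using sum_codegree[OF assms(1), of i] assms(2) by (simp add: of_nat_diff)
  finally show ?thesis .
qed

lemma hg_laplacian_row_sum:
  fixes E :: "('v::finite) set set"
  assumes "uniform_hg m E" "m \<ge> 2"
  shows "(\<Sum>j\<in>UNIV. hg_laplacian m E $ i $ j) = 0"
  using sum.remove[of UNIV i "\<lambda>j. hg_laplacian m E $ i $ j"]
    hg_laplacian_offdiag_sum[OF assms, of i]
  by (simp add: Compl_eq_Diff_UNIV hg_laplacian_def)

lemma hg_laplacian_row_abs_sum: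
  fixes E :: "('v::finite) set set"
  assumes "uniform_hg m E" "m \<ge> 2"
  shows "(\<Sum>j\<in>UNIV. \<bar>hg_laplacian m E $ i $ j\<bar>) = 2 * real (hg_degree E i)"
proof -
  have "(\<Sum>j\<in>-{i}. \<bar>hg_laplacian m E $ i $ j\<bar>) = - (\<Sum>j\<in>-{i}. hg_laplacian m E $ i $ j)"
    using assms(2) by (simp add: sum_negf[symmetric] hg_laplacian_def)
  then show ?thesis
    using sum.remove[of UNIV i "\<lambda>j. \<bar>hg_laplacian m E $ i $ j\<bar>"]
      hg_laplacian_offdiag_sum[OF assms, of i]
    by (simp add: Compl_eq_Diff_UNIV hg_laplacian_def)
qed

lemma hg_degree_le_max_degree: "hg_degree E i \<le> max_degree E"
  unfolding max_degree_def by (rule Max_ge) auto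

lemma min_degree_le_max_degree: "min_degree E \<le> max_degree E"
  unfolding min_degree_def
  by (rule order_trans[OF Min_le hg_degree_le_max_degree[of E undefined]]) auto

lemma hg_laplacian_eigenvalue_le_max_degree:
  fixes E :: "('v::finite) set set"
  assumes "uniform_hg m E" "m \<ge> 2" "is_eigenvalue (hg_laplacian m E) c"
  shows "c \<le> 2 * real (max_degree E)"
proof -
  have "\<bar>c\<bar> \<le> 2 * real (max_degree E)"
    using assms(3) hg_laplacian_row_abs_sum[OF assms(1,2)] hg_degree_le_max_degree
    by (intro eigenvalue_abs_le_row_abs_sum) auto
  then show ?thesis by linarith
qed

lemma hg_connected_single_edge:
  assumes "hg_connected {e}" "e \<noteq> {}"
  shows "e = UNIV"
proof -
  obtain y where "y \<in> e" using assms(2) by blast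
  have "x \<in> e" for x
  proof -
    have "(x, y) \<in> (hg_adj {e})\<^sup>*" using assms(1) unfolding hg_connected_def by blast
    then show ?thesis
      by (cases rule: converse_rtranclE) (use \<open>y \<in> e\<close> in \<open>auto simp: hg_adj_def\<close>)
  qed
  then show ?thesis by blast
qed

lemma hg_degree_single_edge_UNIV: "hg_degree {UNIV} i = 1"
proof -
  have "{e \<in> {UNIV}. i \<in> e} = {UNIV}" by auto
  then show ?thesis unfolding hg_degree_def by (simp only:) simp
qed

lemma hg_codegree_single_edge_UNIV: "hg_codegree {UNIV} i j = 1"
proof -
  have "{e \<in> {UNIV}. i \<in> e \<and> j \<in> e} = {UNIV}" by auto
  then show ?thesis unfolding hg_codegree_def by (simp only:) simp
qed

lemma hg_laplacian_single_edge_eigenvalue_le: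
  fixes c :: real
  assumes "m \<ge> 1" "is_eigenvalue (hg_laplacian m {UNIV :: ('v::finite) set}) c"
  shows "c \<le> 1 + 1 / (real m - 1)"
proof (rule eigenvalue_le_of_scalar_minus_constant)
  show "hg_laplacian m {UNIV :: 'v set} $ i $ j
      = (if i = j then 1 + 1 / (real m - 1) else 0) - 1 / (real m - 1)" for i j
    by (simp add: hg_laplacian_def hg_degree_single_edge_UNIV hg_codegree_single_edge_UNIV
        diff_divide_distrib)
qed (use assms in auto)

lemma twice_max_degree_le_spectral_bound:
  fixes k D d N :: real
  assumes "k \<ge> 1" "D \<ge> 1" "N \<ge> 2" "d \<le> D"
  shows "2 * D \<le> spectral_bound k D d N"
proof -
  have "4 * k^2 * D^2 * 4 \<le> 4 * k^2 * D^2 * N^2"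
    using assms(3) power_mono[of 2 N 2] by (intro mult_left_mono) auto
  moreover have "6 * D * k \<le> 12 * k^2 * D^2"
    using mult_mono[OF assms(1,2)] mult_left_mono[of 1 "2 * (k * D)" "6 * D * k"] assms
    by (simp add: power2_eq_square algebra_simps)
  moreover have "d * k \<le> D * k" using assms by (intro mult_right_mono) auto
  ultimately have "(2 * D * k + 1)^2 \<le> 4 * k^2 * D^2 * N^2 - 2 * d * k + 1"
    by (simp add: power2_eq_square algebra_simps)
  then have "2 * D * k + 1 \<le> sqrt (4 * k^2 * D^2 * N^2 - 2 * d * k + 1)"
    by (rule real_le_rsqrt)
  then show ?thesis using assms by (simp add: spectral_bound_def pos_le_divide_eq algebra_simps)
qed

lemma single_edge_le_spectral_bound:
  fixes k :: real
  assumes "k \<ge> 2"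
  shows "1 + 1 / k \<le> spectral_bound k 1 1 1"
proof -
  have "3^2 \<le> 4 * k^2 - 2 * k + 1"
    using assms mult_right_mono[of 2 k k] unfolding power2_eq_square by linarith
  then have "3 \<le> sqrt (4 * k^2 - 2 * k + 1)" by (rule real_le_rsqrt)
  then show ?thesis using assms by (simp add: spectral_bound_def pos_le_divide_eq field_simps)
qed

lemma hg_laplacian_eigenvalue_le_spectral_bound:
  fixes E :: "('v::finite) set set"
  assumes "uniform_hg m E" "hg_connected E" "m > 2"
    and ev: "is_eigenvalue (hg_laplacian m E) c"
  shows "c \<le> spectral_bound (real m - 1) (max_degree E) (min_degree E) (card E)"
proof -
  have c: "c \<le> 2 * real (max_degree E)"
    by (rule hg_laplacian_eigenvalue_le_max_degree) (use assms in auto)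
  consider "E = {}" | e where "E = {e}" | "card E \<ge> 2"
  proof -
    have "card E = 0 \<or> card E = 1 \<or> card E \<ge> 2" by linarith
    then show ?thesis using that by (auto simp: card_1_singleton_iff)
  qed
  then show ?thesis
  proof cases
    case 1
    then have "max_degree E = 0" by (simp add: max_degree_def hg_degree_def)
    then show ?thesis using c min_degree_le_max_degree[of E] by (simp add: spectral_bound_def)
  next
    case (2 e)
    then have "e \<noteq> {}" using assms(1,3) by (auto simp: uniform_hg_def)
    then have "E = {UNIV}" using 2 assms(2) hg_connected_single_edge by blast
    then have "c \<le> 1 + 1 / (real m - 1)"
      using hg_laplacian_single_edge_eigenvalue_le[of m c] ev assms(3) by simp
    moreover have "max_degree E = 1" "min_degree E = 1"
      using \<open>E = {UNIV}\<close>
      by (simp_all add: max_degree_def min_degree_def hg_degree_single_edge_UNIV)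
    ultimately show ?thesis
      using single_edge_le_spectral_bound[of "real m - 1"] assms(3) \<open>E = {UNIV}\<close> by simp
  next
    case 3
    then obtain e where "e \<in> E" by fastforce
    moreover have "e \<noteq> {}" using calculation assms(1,3) by (auto simp: uniform_hg_def)
    then obtain i where "i \<in> e" by blast
    ultimately have "0 < hg_degree E i" by (auto simp: hg_degree_def card_gt_0_iff)
    then have "1 \<le> real (max_degree E)" using hg_degree_le_max_degree[of E i] by linarith
    then have "2 * real (max_degree E)
        \<le> spectral_bound (real m - 1) (max_degree E) (min_degree E) (card E)"
      using 3 assms(3) min_degree_le_max_degree[of E]
      by (intro twice_max_degree_le_spectral_bound) auto
    then show ?thesis using c by linarith
  qed
qed

theorem corollary6:
  fixes E :: "('v::finite) set set" and m :: nat
  assumes "uniform_hg m E" and "hg_connected E" and "m > 2"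
  shows "largest_eigenvalue (hg_laplacian m E) \<le>
    (2 * real (max_degree E) * (real m - 1) - 1
      + sqrt (4 * (real m - 1)^2 * (real (max_degree E))^2 * (real (card E))^2
              - 2 * real (min_degree E) * (real m - 1) + 1))
    / (2 * (real m - 1))"
proof -
  have "is_eigenvalue (hg_laplacian m E) 0"
    by (intro eigenvalue_zero_if_row_sums_zero hg_laplacian_row_sum) (use assms in auto)
  then have "largest_eigenvalue (hg_laplacian m E)
      \<le> spectral_bound (real m - 1) (max_degree E) (min_degree E) (card E)"
    using hg_laplacian_eigenvalue_le_spectral_bound[OF assms]
    by (intro largest_eigenvalue_le[OF hg_laplacian_symmetric]) auto
  then show ?thesis by (simp add: spectral_bound_def)
qed

end
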